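(* Consider a multi-sender single-uniprior index-coding instance with binary messages, information-flow graph $\mathcal{G}$ and message graph $\mathcal{U}$, and let $\mathcal{V}_S$ be the vertex set of a degenerated leaf SCC of $\mathcal{G}$, with witnessing sets $\mathcal{V}_{\mathrm{inside}}$ and $\mathcal{V}_{\mathrm{outside}}$. Form $(\mathcal{G}',\mathcal{U}')$ by appending this leaf SCC: pick any $v_{\mathrm{inside}}\in\mathcal{V}_{\mathrm{inside}}$; if $\mathcal{V}_{\mathrm{outside}}$ contains exactly one non-leaf vertex, add an arc from $v_{\mathrm{inside}}$ to that vertex; otherwise (all vertices of $\mathcal{V}_{\mathrm{outside}}$ are leaves) add an arc from $v_{\mathrm{inside}}$ to an arbitrarily chosen vertex of $\mathcal{V}_{\mathrm{outside}}$. The message graph and senders are unchanged ($\mathcal{U}'=\mathcal{U}$). Then \[ N_{\mathrm{SCC}}(\mathcal{G}')\in\{N_{\mathrm{SCC}}(\mathcal{G}),\,N_{\mathrm{SCC}}(\mathcal{G})-1\},\qquad \tilde{\ell}^*(\mathcal{G}',\mathcal{U}')=\tilde{\ell}^*(\mathcal{G},\mathcal{U}),\qquad V_{\mathrm{out}}(\mathcal{G}')=V_{\mathrm{out}}(\mathcal{G}), \] where $N_{\mathrm{SCC}}(\cdot)$ denotes the number of leaf SCCs.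
   Context: Multi-sender single-uniprior index coding with binary messages: there are $n$ receivers and $n$ independent messages $x_1,\dots,x_n$, each a single bit uniformly distributed on $\{0,1\}$. Receiver $i$ knows $x_i$ a priori and requests a set of messages not containing $x_i$. The information-flow graph is the directed graph $\mathcal{G}=(\mathcal{V},\mathcal{A})$ with an arc $(j\to i)$ iff receiver $i$ requests $x_j$. There are $S$ senders; sender $s$ knows a subset $\mathcal{M}_s$ of the messages, and every message is known to some sender. An index code consists of, for each sender $s$, an encoding function mapping the messages in $\mathcal{M}_s$ to $\ell_s$ bits, and for each receiver $i$ a decoding function that, from all senders' outputs together with $x_i$, returns every message requested by $i$, for all message values; its length is $\sum_s \ell_s$. $\tilde{\ell}^*(\mathcal{G},\mathcal{U})$ is the minimum length of an index code for the instance. The message graph $\mathcal{U}$ is the undirected graph on $\mathcal{V}$ with an edge $\{i,j\}$ iff some sender knows both $x_i$ and $x_j$. A leaf vertex of $\mathcal{G}$ has no outgoing arcs; $V_{\mathrm{out}}(\mathcal{G})$ is the number of non-leaf vertices; $j$ is a predecessor of $i$ iff there is a directed path in $\mathcal{G}$ from $j$ to $i$. A leaf SCC is a strongly connected component of $\mathcal{G}$ with at least two vertices and no arc from it to a vertex outside it. For a vertex set $\mathcal{S}$, a vertex $i\notin\mathcal{S}$ is a neighbor of $\mathcal{S}$ iff $\mathcal{U}$ has an edge between $i$ and some vertex of $\mathcal{S}$. A leaf SCC with vertex set $\mathcal{V}_S$ is message-connected iff the subgraph of $\mathcal{U}$ induced by $\mathcal{V}_S$ is connected; message-disconnected iff two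 vertices of $\mathcal{V}_S$ are joined by no path in $\mathcal{U}$; semi-message-connected otherwise. A semi-message-connected leaf SCC is degenerated iff there exist $\mathcal{V}_{\mathrm{inside}}\subsetneq\mathcal{V}_S$ and $\mathcal{V}_{\mathrm{outside}}\subseteq\mathcal{V}\setminus\mathcal{V}_S$ such that: $\mathcal{U}$ has no edge between $\mathcal{V}_{\mathrm{inside}}$ and $\mathcal{V}_S\setminus\mathcal{V}_{\mathrm{inside}}$; $\mathcal{V}_{\mathrm{outside}}$ contains at most one non-leaf vertex of $\mathcal{G}$; and every neighbor of $\mathcal{V}_{\mathrm{inside}}$ is either in $\mathcal{V}_{\mathrm{outside}}$ or a predecessor in $\mathcal{G}$ of some vertex of $\mathcal{V}_{\mathrm{outside}}$. These $\mathcal{V}_{\mathrm{inside}},\mathcal{V}_{\mathrm{outside}}$ are called witnessing sets. *)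

theory Defs
  imports Main
begin

text \<open>Vertices / receivers / messages are 0..<n. The information-flow graph is an arc
relation A :: (nat \<times> nat) set, with (j,i) \<in> A iff receiver i requests x_j.
Senders are 0..<S, sender s knows the messages M s.\<close>

definition valid_instance :: "nat \<Rightarrow> (nat \<times> nat) set \<Rightarrow> nat \<Rightarrow> (nat \<Rightarrow> nat set) \<Rightarrow> bool" where
  "valid_instance n A S M \<longleftrightarrow>
     A \<subseteq> {0..<n} \<times> {0..<n} \<and> (\<forall>i. (i, i) \<notin> A) \<and>
     (\<forall>s<S. M s \<subseteq> {0..<n}) \<and> (\<forall>k<n. \<exists>s<S. k \<in> M s)"

text \<open>An index code: sender s outputs E s x, a bit list of length l s depending only on
the messages in M s; receiver i, from all senders' outputs and its own x_i, decodes
(via D i) every message it requests.\<close>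

definition is_index_code ::
  "nat \<Rightarrow> (nat \<times> nat) set \<Rightarrow> nat \<Rightarrow> (nat \<Rightarrow> nat set) \<Rightarrow> (nat \<Rightarrow> nat)
   \<Rightarrow> (nat \<Rightarrow> (nat \<Rightarrow> bool) \<Rightarrow> bool list)
   \<Rightarrow> (nat \<Rightarrow> (nat \<Rightarrow> bool list) \<Rightarrow> bool \<Rightarrow> nat \<Rightarrow> bool) \<Rightarrow> bool" where
  "is_index_code n A S M l E D \<longleftrightarrow>
     (\<forall>s<S. \<forall>x. length (E s x) = l s) \<and>
     (\<forall>s<S. \<forall>x y. (\<forall>k\<in>M s. x k = y k) \<longrightarrow> E s x = E s y) \<and>
     (\<forall>i<n. \<forall>x. \<forall>j. (j, i) \<in> A \<longrightarrow>
        D i (\<lambda>s. if s < S then E s x else []) (x i) j = x j)"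

definition code_length_achievable ::
  "nat \<Rightarrow> (nat \<times> nat) set \<Rightarrow> nat \<Rightarrow> (nat \<Rightarrow> nat set) \<Rightarrow> nat \<Rightarrow> bool" where
  "code_length_achievable n A S M L \<longleftrightarrow>
     (\<exists>l E D. is_index_code n A S M l E D \<and> (\<Sum>s<S. l s) = L)"

definition min_code_length :: "nat \<Rightarrow> (nat \<times> nat) set \<Rightarrow> nat \<Rightarrow> (nat \<Rightarrow> nat set) \<Rightarrow> nat" where
  "min_code_length n A S M = (LEAST L. code_length_achievable n A S M L)"

definition msg_edge :: "nat \<Rightarrow> (nat \<Rightarrow> nat set) \<Rightarrow> nat \<Rightarrow> nat \<Rightarrow> bool" where
  "msg_edge S M i j \<longleftrightarrow> i \<noteq> j \<and> (\<exists>s<S. i \<in> M s \<and> j \<in> M s)"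

definition scc :: "(nat \<times> nat) set \<Rightarrow> nat \<Rightarrow> nat set" where
  "scc A v = {u. (v, u) \<in> A\<^sup>* \<and> (u, v) \<in> A\<^sup>*}"

definition is_leaf_scc :: "nat \<Rightarrow> (nat \<times> nat) set \<Rightarrow> nat set \<Rightarrow> bool" where
  "is_leaf_scc n A C \<longleftrightarrow>
     (\<exists>v\<in>{0..<n}. C = scc A v) \<and> card C \<ge> 2 \<and>
     (\<forall>a b. (a, b) \<in> A \<longrightarrow> a \<in> C \<longrightarrow> b \<in> C)"

definition num_leaf_scc :: "nat \<Rightarrow> (nat \<times> nat) set \<Rightarrow> nat" where
  "num_leaf_scc n A = card {C. is_leaf_scc n A C}"

definition is_leaf :: "(nat \<times> nat) set \<Rightarrow> nat \<Rightarrow> bool" where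
  "is_leaf A v \<longleftrightarrow> (\<forall>u. (v, u) \<notin> A)"

definition V_out :: "nat \<Rightarrow> (nat \<times> nat) set \<Rightarrow> nat" where
  "V_out n A = card {v\<in>{0..<n}. \<not> is_leaf A v}"

definition is_pred :: "(nat \<times> nat) set \<Rightarrow> nat \<Rightarrow> nat \<Rightarrow> bool" where
  "is_pred A j i \<longleftrightarrow> (j, i) \<in> A\<^sup>+"

definition is_neighbor :: "nat \<Rightarrow> (nat \<Rightarrow> nat set) \<Rightarrow> nat set \<Rightarrow> nat \<Rightarrow> bool" where
  "is_neighbor S M X i \<longleftrightarrow> i \<notin> X \<and> (\<exists>x\<in>X. msg_edge S M i x)"

definition connected_in :: "nat \<Rightarrow> (nat \<Rightarrow> nat set) \<Rightarrow> nat set \<Rightarrow> nat \<Rightarrow> nat \<Rightarrow> bool" where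
  "connected_in S M X a b \<longleftrightarrow>
     (a, b) \<in> {(i, j). i \<in> X \<and> j \<in> X \<and> msg_edge S M i j}\<^sup>*"

definition message_connected :: "nat \<Rightarrow> (nat \<Rightarrow> nat set) \<Rightarrow> nat set \<Rightarrow> bool" where
  "message_connected S M C \<longleftrightarrow> (\<forall>a\<in>C. \<forall>b\<in>C. connected_in S M C a b)"

definition message_disconnected :: "nat \<Rightarrow> nat \<Rightarrow> (nat \<Rightarrow> nat set) \<Rightarrow> nat set \<Rightarrow> bool" where
  "message_disconnected n S M C \<longleftrightarrow>
     (\<exists>a\<in>C. \<exists>b\<in>C. \<not> connected_in S M {0..<n} a b)"

definition semi_message_connected :: "nat \<Rightarrow> nat \<Rightarrow> (nat \<Rightarrow> nat set) \<Rightarrow> nat set \<Rightarrow> bool" where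
  "semi_message_connected n S M C \<longleftrightarrow>
     \<not> message_connected S M C \<and> \<not> message_disconnected n S M C"

definition witnessing_sets ::
  "nat \<Rightarrow> (nat \<times> nat) set \<Rightarrow> nat \<Rightarrow> (nat \<Rightarrow> nat set) \<Rightarrow> nat set \<Rightarrow> nat set \<Rightarrow> nat set \<Rightarrow> bool" where
  "witnessing_sets n A S M C Vin Vout \<longleftrightarrow>
     Vin \<subset> C \<and> Vout \<subseteq> {0..<n} - C \<and>
     (\<forall>a\<in>Vin. \<forall>b\<in>C - Vin. \<not> msg_edge S M a b) \<and>
     card {v\<in>Vout. \<not> is_leaf A v} \<le> 1 \<and>
     (\<forall>i. is_neighbor S M Vin i \<longrightarrow> i \<in> Vout \<or> (\<exists>w\<in>Vout. is_pred A i w))"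

definition degenerated_leaf_scc ::
  "nat \<Rightarrow> (nat \<times> nat) set \<Rightarrow> nat \<Rightarrow> (nat \<Rightarrow> nat set) \<Rightarrow> nat set \<Rightarrow> bool" where
  "degenerated_leaf_scc n A S M C \<longleftrightarrow>
     is_leaf_scc n A C \<and> semi_message_connected n S M C \<and>
     (\<exists>Vin Vout. witnessing_sets n A S M C Vin Vout)"

end

theory Submission
  imports Defs
begin

text \<open>Vertex \<open>v_in\<close> lies in a leaf SCC, so it already has an outgoing arc: the new arc
\<open>v_in \<rightarrow> t\<close> changes neither the non-leaf vertices nor any leaf SCC avoiding \<open>v_in\<close>, while the
leaf SCC of \<open>v_in\<close> is lost and at most one new leaf SCC (that of \<open>v_in\<close>) appears.
A new arc can only make codes longer. Conversely, take a code for the old graph and fix the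
messages of the leaves in V_outside other than \<open>t\<close> (nobody requests them) to \<open>False\<close>.
Decodability propagates agreement of two message vectors with equal codewords backwards along
paths, so two such vectors agreeing at \<open>t\<close> agree on V_outside, on its predecessors and hence on
every neighbour of V_inside. Splicing one vector into the other on V_inside then keeps the
codeword, and a path from \<open>v_in\<close> to a vertex of the SCC outside V_inside shows that the two
vectors agree at \<open>v_in\<close>: receiver \<open>t\<close> can decode \<open>x_v_in\<close> from what it already sees.\<close>

definition codeword :: "nat \<Rightarrow> (nat \<Rightarrow> (nat \<Rightarrow> bool) \<Rightarrow> bool list) \<Rightarrow> (nat \<Rightarrow> bool) \<Rightarrow> nat \<Rightarrow> bool list"
  where "codeword S E x = (\<lambda>s. if s < S then E s x else [])"

lemma is_index_code_iff:
  "is_index_code n A S M l E D \<longleftrightarrow>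
     (\<forall>s<S. \<forall>x. length (E s x) = l s) \<and>
     (\<forall>s<S. \<forall>x y. (\<forall>k\<in>M s. x k = y k) \<longrightarrow> E s x = E s y) \<and>
     (\<forall>i<n. \<forall>x j. (j, i) \<in> A \<longrightarrow> D i (codeword S E x) (x i) j = x j)"
  unfolding is_index_code_def codeword_def by (rule refl)

lemma is_index_code_local:
  assumes code: "is_index_code n A S M l E D" and "s < S" "\<forall>k\<in>M s. x k = y k"
  shows "E s x = E s y"
proof -
  have "\<forall>s<S. \<forall>x y. (\<forall>k\<in>M s. x k = y k) \<longrightarrow> E s x = E s y"
    using code unfolding is_index_code_iff by (elim conjE)
  then show ?thesis using assms(2,3) by blast
qed

lemma is_index_code_length:
  assumes code: "is_index_code n A S M l E D" and "s < S"
  shows "length (E s x) = l s"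
proof -
  have "\<forall>s<S. \<forall>x. length (E s x) = l s"
    using code unfolding is_index_code_iff by (elim conjE)
  then show ?thesis using \<open>s < S\<close> by blast
qed

lemma is_index_code_decodes:
  assumes code: "is_index_code n A S M l E D" and "i < n" "(j, i) \<in> A"
  shows "D i (codeword S E x) (x i) j = x j"
proof -
  have "\<forall>i<n. \<forall>x j. (j, i) \<in> A \<longrightarrow> D i (codeword S E x) (x i) j = x j"
    using code unfolding is_index_code_iff by (elim conjE)
  then show ?thesis using assms(2,3) by blast
qed

lemma is_index_code_mono:
  assumes "is_index_code n A' S M l E D" "A \<subseteq> A'"
  shows "is_index_code n A S M l E D"
  using assms unfolding is_index_code_iff by (elim conjE) (intro conjI; blast)

lemma index_code_agree_backwards:
  assumes code: "is_index_code n A S M l E D"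
    and arcs: "A \<subseteq> {0..<n} \<times> {0..<n}"
    and cw: "codeword S E x = codeword S E y"
    and path: "(j, i) \<in> A\<^sup>*" and agree: "x i = y i"
  shows "x j = y j"
  using path agree
proof (induction rule: converse_rtrancl_induct)
  case base
  then show ?case .
next
  case (step j k)
  then have "k < n" using arcs by auto
  have "x j = D k (codeword S E x) (x k) j"
    using is_index_code_decodes[OF code \<open>k < n\<close> \<open>(j, k) \<in> A\<close>] by simp
  also have "\<dots> = D k (codeword S E y) (y k) j" using cw step by simp
  also have "\<dots> = y j"
    using is_index_code_decodes[OF code \<open>k < n\<close> \<open>(j, k) \<in> A\<close>] .
  finally show ?case .
qed

lemma codeword_splice:
  assumes code: "is_index_code n A S M l E D"
    and cw: "codeword S E z = codeword S E y"
    and nbrs: "\<forall>m. is_neighbor S M X m \<longrightarrow> z m = y m"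
  shows "codeword S E (\<lambda>k. if k \<in> X then z k else y k) = codeword S E y"
proof -
  let ?w = "\<lambda>k. if k \<in> X then z k else y k"
  have "E s ?w = E s y" if "s < S" for s
  proof (cases "M s \<inter> X = {}")
    case True
    then have "\<forall>m\<in>M s. ?w m = y m" by auto
    then show ?thesis by (rule is_index_code_local[OF code \<open>s < S\<close>])
  next
    case False
    then obtain k where k: "k \<in> M s" "k \<in> X" by blast
    have "?w m = z m" if "m \<in> M s" for m
    proof (cases "m \<in> X")
      case False
      then have "is_neighbor S M X m"
        using k that \<open>s < S\<close> unfolding is_neighbor_def msg_edge_def by (auto intro!: bexI[of _ k])
      then show ?thesis using nbrs False by simp
    qed simp
    then have "\<forall>m\<in>M s. ?w m = z m" by blast
    then have "E s ?w = E s z" by (rule is_index_code_local[OF code \<open>s < S\<close>])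
    also have "\<dots> = E s y" using fun_cong[OF cw, of s] \<open>s < S\<close> by (simp add: codeword_def)
    finally show ?thesis .
  qed
  then show ?thesis unfolding codeword_def by (intro ext) simp
qed

lemma index_code_agree_inside:
  assumes code: "is_index_code n A S M l E D"
    and arcs: "A \<subseteq> {0..<n} \<times> {0..<n}"
    and cw: "codeword S E z = codeword S E y"
    and nbrs: "\<forall>m. is_neighbor S M X m \<longrightarrow> z m = y m"
    and "v \<in> X" and path: "(v, r) \<in> A\<^sup>*" and "r \<notin> X"
  shows "z v = y v"
proof -
  let ?w = "\<lambda>k. if k \<in> X then z k else y k"
  have "?w v = y v"
    using index_code_agree_backwards[OF code arcs codeword_splice[OF code cw nbrs] path]
      \<open>r \<notin> X\<close> by simp
  then show ?thesis using \<open>v \<in> X\<close> by simp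
qed

lemma scc_eq_if_mem: "u \<in> scc A v \<Longrightarrow> scc A u = scc A v"
  unfolding scc_def by (blast intro: rtrancl_trans)

lemma mem_scc_self: "v \<in> scc A v"
  unfolding scc_def by blast

lemma scc_reach: "u \<in> scc A v \<Longrightarrow> w \<in> scc A v \<Longrightarrow> (u, w) \<in> A\<^sup>*"
  unfolding scc_def by (blast intro: rtrancl_trans)

lemma scc_subset:
  assumes "A \<subseteq> {0..<n} \<times> {0..<n}" "v < n"
  shows "scc A v \<subseteq> {0..<n}"
proof
  fix u assume "u \<in> scc A v"
  then have "(v, u) \<in> A\<^sup>*" unfolding scc_def by blast
  then show "u \<in> {0..<n}" using assms by (induction rule: rtrancl_induct) auto
qed

lemma witnessing_sets_codeword_determines:
  assumes code: "is_index_code n A S M l E D"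
    and arcs: "A \<subseteq> {0..<n} \<times> {0..<n}"
    and leaf: "is_leaf_scc n A C"
    and wit: "witnessing_sets n A S M C Vin Vout"
    and "v \<in> Vin"
    and cw: "codeword S E z = codeword S E y"
    and agree: "\<forall>w\<in>Vout. z w = y w"
  shows "z v = y v"
proof -
  obtain v0 where "C = scc A v0" using leaf unfolding is_leaf_scc_def by blast
  obtain r where r: "r \<in> C" "r \<notin> Vin" and "v \<in> C"
    using wit \<open>v \<in> Vin\<close> unfolding witnessing_sets_def by blast
  have "z m = y m" if "is_neighbor S M Vin m" for m
  proof -
    have "m \<in> Vout \<or> (\<exists>w\<in>Vout. (m, w) \<in> A\<^sup>+)"
      using wit that unfolding witnessing_sets_def is_pred_def by blast
    then obtain w where "w \<in> Vout" "(m, w) \<in> A\<^sup>*"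
      by (meson rtrancl.rtrancl_refl trancl_into_rtrancl)
    then show ?thesis using index_code_agree_backwards[OF code arcs cw] agree by blast
  qed
  moreover have "(v, r) \<in> A\<^sup>*" using scc_reach \<open>C = scc A v0\<close> \<open>v \<in> C\<close> r(1) by blast
  ultimately show ?thesis using index_code_agree_inside[OF code arcs cw] \<open>v \<in> Vin\<close> r(2) by blast
qed

text \<open>Receiver \<open>t\<close> does not know the messages in \<open>L\<close>; once they are fixed to \<open>False\<close>,
any message vector explaining what \<open>t\<close> sees has the right value at \<open>v\<close>.\<close>

lemma index_code_add_arc:
  assumes code: "is_index_code n A S M l E D"
    and leaves: "\<forall>w\<in>L. is_leaf A w" and "t \<notin> L" "v \<notin> L"
    and determ: "\<And>z y. codeword S E z = codeword S E y \<Longrightarrow> z t = y t \<Longrightarrow> \<forall>w\<in>L. z w = y w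
                   \<Longrightarrow> z v = y v"
  shows "\<exists>E' D'. is_index_code n (insert (v, t) A) S M l E' D'"
proof -
  define zero where "zero = (\<lambda>x::nat \<Rightarrow> bool. \<lambda>k. if k \<in> L then False else x k)"
  define E' where "E' = (\<lambda>s x. E s (zero x))"
  define explains where "explains = (\<lambda>c b z. codeword S E z = c \<and> z t = b \<and> (\<forall>w\<in>L. \<not> z w))"
  define D' where "D' = (\<lambda>i c b j. if i = t \<and> j = v then (SOME z. explains c b z) v
                          else if i \<in> L then D i c False j else D i c b j)"
  have cw: "codeword S E' x = codeword S E (zero x)" for x
    by (simp add: codeword_def E'_def)
  have decode: "D' i (codeword S E' x) (x i) j = x j"
    if "i < n" "(j, i) \<in> insert (v, t) A" for i x j
  proof (cases "i = t \<and> j = v")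
    case True
    define c where "c = codeword S E (zero x)"
    define z where "z = (SOME z. explains c (x i) z)"
    have "explains c (x i) (zero x)"
      using True \<open>t \<notin> L\<close> by (simp add: explains_def zero_def c_def)
    then have "explains c (x i) z" unfolding z_def by (rule someI[of "explains c (x i)"])
    then have "z v = zero x v"
      using True \<open>t \<notin> L\<close> determ[of z "zero x"] unfolding explains_def c_def
      by (simp add: zero_def)
    then have "D' i (codeword S E (zero x)) (x i) j = zero x j"
      using True by (simp add: D'_def c_def z_def)
    then show ?thesis using True \<open>v \<notin> L\<close> by (simp add: cw zero_def)
  next
    case False
    then have "(j, i) \<in> A" using that by auto
    then have "j \<notin> L" using leaves unfolding is_leaf_def by blast
    have "D i (codeword S E (zero x)) (zero x i) j = zero x j"
      using is_index_code_decodes[OF code \<open>i < n\<close> \<open>(j, i) \<in> A\<close>] .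
    moreover have "zero x i = (if i \<in> L then False else x i)" "zero x j = x j"
      using \<open>j \<notin> L\<close> by (simp_all add: zero_def)
    ultimately show ?thesis using False by (auto simp: D'_def cw)
  qed
  have "is_index_code n (insert (v, t) A) S M l E' D'"
    unfolding is_index_code_iff
  proof (intro conjI)
    show "\<forall>s<S. \<forall>x. length (E' s x) = l s"
      using is_index_code_length[OF code] by (simp add: E'_def)
    show "\<forall>s<S. \<forall>x y. (\<forall>k\<in>M s. x k = y k) \<longrightarrow> E' s x = E' s y"
    proof (intro allI impI)
      fix s and x y :: "nat \<Rightarrow> bool" assume "s < S" "\<forall>k\<in>M s. x k = y k"
      then have "\<forall>k\<in>M s. zero x k = zero y k" by (simp add: zero_def)
      then show "E' s x = E' s y" unfolding E'_def by (rule is_index_code_local[OF code \<open>s < S\<close>])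
    qed
    show "\<forall>i<n. \<forall>x j. (j, i) \<in> insert (v, t) A \<longrightarrow> D' i (codeword S E' x) (x i) j = x j"
      using decode by blast
  qed
  then show ?thesis by blast
qed

lemma min_code_length_insert_eq:
  assumes "\<And>l E D. is_index_code n A S M l E D \<Longrightarrow> \<exists>E' D'. is_index_code n (insert a A) S M l E' D'"
  shows "min_code_length n (insert a A) S M = min_code_length n A S M"
proof -
  have "code_length_achievable n (insert a A) S M = code_length_achievable n A S M"
  proof
    fix L
    show "code_length_achievable n (insert a A) S M L = code_length_achievable n A S M L"
      using assms is_index_code_mono[of n "insert a A" S M _ _ _ A]
      unfolding code_length_achievable_def by (metis subset_insertI)
  qed
  then show ?thesis unfolding min_code_length_def by simp
qed

lemma leaf_scc_mem_not_leaf: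
  assumes "is_leaf_scc n A C" "v \<in> C"
  shows "\<not> is_leaf A v"
proof
  assume "is_leaf A v"
  obtain v0 where "C = scc A v0" and "card C \<ge> 2" using assms(1) unfolding is_leaf_scc_def by blast
  then obtain u where "u \<in> C" "u \<noteq> v"
    by (metis card.infinite card_le_Suc0_iff_eq not_less_eq_eq numeral_2_eq_2 zero_le)
  then have "(v, u) \<in> A\<^sup>*" using scc_reach \<open>C = scc A v0\<close> assms(2) by blast
  then show False using \<open>u \<noteq> v\<close> \<open>is_leaf A v\<close> unfolding is_leaf_def
    by (metis converse_rtranclE)
qed

lemma V_out_insert_arc:
  assumes "\<not> is_leaf A v"
  shows "V_out n (insert (v, t) A) = V_out n A"
proof -
  have "is_leaf (insert (v, t) A) u = is_leaf A u" for u
    using assms unfolding is_leaf_def by auto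
  then show ?thesis unfolding V_out_def by simp
qed

lemma finite_leaf_sccs:
  assumes "A \<subseteq> {0..<n} \<times> {0..<n}"
  shows "finite {C. is_leaf_scc n A C}"
proof (rule finite_subset)
  show "{C. is_leaf_scc n A C} \<subseteq> Pow {0..<n}"
    using scc_subset[OF assms] unfolding is_leaf_scc_def by fastforce
qed simp

lemma rtrancl_insert_from_closed:
  assumes "(u, x) \<in> (insert (p, q) A)\<^sup>*" "u \<in> X"
    and "\<forall>a b. (a, b) \<in> insert (p, q) A \<longrightarrow> a \<in> X \<longrightarrow> b \<in> X" "p \<notin> X"
  shows "(u, x) \<in> A\<^sup>* \<and> x \<in> X"
  using assms by (induction rule: rtrancl_induct) (auto intro: rtrancl_into_rtrancl)

lemma scc_insert_arc_closed:
  assumes closed: "\<forall>a b. (a, b) \<in> insert (v, t) A \<longrightarrow> a \<in> X \<longrightarrow> b \<in> X"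
    and "v \<notin> X" "u \<in> X"
  shows "scc (insert (v, t) A) u = scc A u"
proof
  show "scc A u \<subseteq> scc (insert (v, t) A) u"
    unfolding scc_def using rtrancl_mono[of A "insert (v, t) A"] by blast
  show "scc (insert (v, t) A) u \<subseteq> scc A u"
  proof
    fix x assume "x \<in> scc (insert (v, t) A) u"
    then have fwd: "(u, x) \<in> (insert (v, t) A)\<^sup>*" and bwd: "(x, u) \<in> (insert (v, t) A)\<^sup>*"
      unfolding scc_def by blast+
    have "(u, x) \<in> A\<^sup>*" "x \<in> X"
      using rtrancl_insert_from_closed[OF fwd \<open>u \<in> X\<close> closed \<open>v \<notin> X\<close>] by blast+
    moreover have "(x, u) \<in> A\<^sup>*"
      using rtrancl_insert_from_closed[OF bwd \<open>x \<in> X\<close> closed \<open>v \<notin> X\<close>] by blast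
    ultimately show "x \<in> scc A u" unfolding scc_def by blast
  qed
qed

lemma leaf_scc_insert_arc_iff:
  assumes "v \<notin> X"
  shows "is_leaf_scc n (insert (v, t) A) X \<longleftrightarrow> is_leaf_scc n A X"
proof -
  let ?A' = "insert (v, t) A"
  have closed_iff: "(\<forall>a b. (a, b) \<in> ?A' \<longrightarrow> a \<in> X \<longrightarrow> b \<in> X) \<longleftrightarrow>
                    (\<forall>a b. (a, b) \<in> A \<longrightarrow> a \<in> X \<longrightarrow> b \<in> X)"
    using assms by auto
  have "(\<exists>w\<in>{0..<n}. X = scc ?A' w) \<longleftrightarrow> (\<exists>w\<in>{0..<n}. X = scc A w)"
    if closed: "\<forall>a b. (a, b) \<in> ?A' \<longrightarrow> a \<in> X \<longrightarrow> b \<in> X"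
  proof
    assume "\<exists>w\<in>{0..<n}. X = scc ?A' w"
    then obtain w where "w < n" "X = scc ?A' w" by auto
    moreover have "w \<in> X" using \<open>X = scc ?A' w\<close> mem_scc_self by metis
    ultimately show "\<exists>w\<in>{0..<n}. X = scc A w"
      using scc_insert_arc_closed[OF closed assms] by (intro bexI[of _ w]) auto
  next
    assume "\<exists>w\<in>{0..<n}. X = scc A w"
    then obtain w where "w < n" "X = scc A w" by auto
    moreover have "w \<in> X" using \<open>X = scc A w\<close> mem_scc_self by metis
    ultimately show "\<exists>w\<in>{0..<n}. X = scc ?A' w"
      using scc_insert_arc_closed[OF closed assms] by (intro bexI[of _ w]) auto
  qed
  then show ?thesis unfolding is_leaf_scc_def closed_iff by blast
qed

lemma num_leaf_scc_insert_arc: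
  assumes arcs: "A \<subseteq> {0..<n} \<times> {0..<n}" and "v < n" "t < n"
    and leaf: "is_leaf_scc n A C" and "v \<in> C" "t \<notin> C"
  shows "num_leaf_scc n (insert (v, t) A) = num_leaf_scc n A \<or>
         num_leaf_scc n (insert (v, t) A) = num_leaf_scc n A - 1"
proof -
  let ?A' = "insert (v, t) A"
  define F where "F = {X. is_leaf_scc n A X}"
  define F' where "F' = {X. is_leaf_scc n ?A' X}"
  have "finite F" unfolding F_def using finite_leaf_sccs[OF arcs] .
  have "finite F'" unfolding F'_def using finite_leaf_sccs arcs \<open>v < n\<close> \<open>t < n\<close> by simp
  have "C \<in> F" using leaf by (simp add: F_def)
  have other_sccs: "v \<notin> X" if "X \<in> F" "X \<noteq> C" for X
  proof
    assume "v \<in> X"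
    obtain u w where "X = scc A u" "C = scc A w"
      using \<open>X \<in> F\<close> leaf unfolding F_def is_leaf_scc_def by blast
    then show False using \<open>v \<in> X\<close> \<open>v \<in> C\<close> \<open>X \<noteq> C\<close> scc_eq_if_mem by metis
  qed
  have "C \<notin> F'"
    using \<open>v \<in> C\<close> \<open>t \<notin> C\<close> unfolding F'_def is_leaf_scc_def by blast
  have old: "F - {C} \<subseteq> F'"
    using other_sccs leaf_scc_insert_arc_iff[of v _ n t A] unfolding F_def F'_def by blast
  have new: "F' \<subseteq> insert (scc ?A' v) (F - {C})"
  proof
    fix X assume "X \<in> F'"
    show "X \<in> insert (scc ?A' v) (F - {C})"
    proof (cases "v \<in> X")
      case True
      obtain w where "X = scc ?A' w" using \<open>X \<in> F'\<close> unfolding F'_def is_leaf_scc_def by blast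
      then have "X = scc ?A' v" using True by (simp add: scc_eq_if_mem)
      then show ?thesis by simp
    next
      case False
      then show ?thesis
        using \<open>X \<in> F'\<close> \<open>C \<notin> F'\<close> leaf_scc_insert_arc_iff[OF False] unfolding F_def F'_def by blast
    qed
  qed
  have "card (F - {C}) \<le> card F'" using old \<open>finite F'\<close> by (rule card_mono[rotated])
  moreover have "card F' \<le> card (F - {C}) + 1"
  proof -
    have "card F' \<le> card (insert (scc ?A' v) (F - {C}))"
      using new \<open>finite F\<close> by (simp add: card_mono)
    also have "\<dots> \<le> card (F - {C}) + 1" by (simp add: card_insert_le_m1)
    finally show ?thesis .
  qed
  moreover have "card (F - {C}) = card F - 1" "card F \<noteq> 0"
    using \<open>C \<in> F\<close> \<open>finite F\<close> by auto
  ultimately show ?thesis unfolding num_leaf_scc_def F_def[symmetric] F'_def[symmetric] by linarith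
qed

theorem proposition2:
  fixes n S :: nat and A :: "(nat \<times> nat) set" and M :: "nat \<Rightarrow> nat set"
    and C Vin Vout :: "nat set" and v_in t :: nat
  assumes inst: "valid_instance n A S M"
    and degen: "degenerated_leaf_scc n A S M C"
    and wit: "witnessing_sets n A S M C Vin Vout"
    and vin: "v_in \<in> Vin"
    and tgt: "t \<in> Vout" "\<forall>w\<in>Vout. \<not> is_leaf A w \<longrightarrow> w = t"
  shows "(num_leaf_scc n (insert (v_in, t) A) = num_leaf_scc n A \<or>
          num_leaf_scc n (insert (v_in, t) A) = num_leaf_scc n A - 1) \<and>
         min_code_length n (insert (v_in, t) A) S M = min_code_length n A S M \<and>
         V_out n (insert (v_in, t) A) = V_out n A"
proof -
  have arcs: "A \<subseteq> {0..<n} \<times> {0..<n}" using inst unfolding valid_instance_def by blast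
  have leaf: "is_leaf_scc n A C" using degen unfolding degenerated_leaf_scc_def by blast
  have "v_in \<in> C" "t < n" "t \<notin> C" using wit vin tgt(1) unfolding witnessing_sets_def by auto
  have "v_in < n"
    using leaf \<open>v_in \<in> C\<close> scc_subset[OF arcs] unfolding is_leaf_scc_def by fastforce
  have "\<not> is_leaf A v_in" using leaf_scc_mem_not_leaf[OF leaf \<open>v_in \<in> C\<close>] .
  have "\<exists>E' D'. is_index_code n (insert (v_in, t) A) S M l E' D'"
    if code: "is_index_code n A S M l E D" for l E D
  proof (rule index_code_add_arc[OF code, where L = "{w\<in>Vout. is_leaf A w \<and> w \<noteq> t}"])
    show "v_in \<notin> {w\<in>Vout. is_leaf A w \<and> w \<noteq> t}" using \<open>\<not> is_leaf A v_in\<close> by blast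
    show "z v_in = y v_in" if "codeword S E z = codeword S E y" "z t = y t"
      "\<forall>w\<in>{w\<in>Vout. is_leaf A w \<and> w \<noteq> t}. z w = y w" for z y
      using witnessing_sets_codeword_determines[OF code arcs leaf wit vin that(1)] that(2,3) tgt(2)
      by blast
  qed auto
  then show ?thesis
    using num_leaf_scc_insert_arc[OF arcs \<open>v_in < n\<close> \<open>t < n\<close> leaf \<open>v_in \<in> C\<close> \<open>t \<notin> C\<close>]
      min_code_length_insert_eq V_out_insert_arc[OF \<open>\<not> is_leaf A v_in\<close>]
    by presburger
qed

end
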